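(* Let $A$ be a nicely essential subring of a ring $S$. Then: (1) If $A$ is prime (respectively, semiprime), then so is $S$; if $A$ is prime (resp. semiprime) and left Goldie, then $S$ is prime (resp. semiprime) and left Goldie. (2) If $S$ is left Goldie, then so is $A$. (3) If $S$ is prime (respectively, semiprime) and left Goldie, then every strongly nicely essential subring of $S$ is prime (respectively, semiprime) and left Goldie.
   Context: A subring $A$ of a ring $S$ (same identity) is a nicely essential subring if for every finite set $E\subseteq S$ of non-zero elements there exists $a\in A$ with $0\neq ax\in A$ for all $x\in E$. It is a strongly nicely essential subring if moreover for every $x\in S$ there exists a left regular element $c$ of $A$ (i.e. $c\in A$ with $\{a\in A: ac=0\}=0$) such that $cx\in A$. A ring is left Goldie if it has finite left uniform dimension and satisfies the ascending chain condition on left annihilators. *)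

theory Defs
  imports "HOL-Algebra.Algebra"
begin

text \<open>All rings are associative with identity (HOL-Algebra ring). A subring A of S is
  a subset with subring A S (contains the identity of S); A viewed as a ring is
  S restricted to carrier A.\<close>

definition prime_ring :: "('a, 'b) ring_scheme \<Rightarrow> bool" where
  "prime_ring R \<longleftrightarrow> \<one>\<^bsub>R\<^esub> \<noteq> \<zero>\<^bsub>R\<^esub> \<and>
     (\<forall>a\<in>carrier R. \<forall>b\<in>carrier R.
        (\<forall>r\<in>carrier R. a \<otimes>\<^bsub>R\<^esub> r \<otimes>\<^bsub>R\<^esub> b = \<zero>\<^bsub>R\<^esub>)
        \<longrightarrow> a = \<zero>\<^bsub>R\<^esub> \<or> b = \<zero>\<^bsub>R\<^esub>)"

definition semiprime_ring :: "('a, 'b) ring_scheme \<Rightarrow> bool" where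
  "semiprime_ring R \<longleftrightarrow>
     (\<forall>a\<in>carrier R. (\<forall>r\<in>carrier R. a \<otimes>\<^bsub>R\<^esub> r \<otimes>\<^bsub>R\<^esub> a = \<zero>\<^bsub>R\<^esub>)
        \<longrightarrow> a = \<zero>\<^bsub>R\<^esub>)"

definition left_ideal :: "'a set \<Rightarrow> ('a, 'b) ring_scheme \<Rightarrow> bool" where
  "left_ideal I R \<longleftrightarrow> additive_subgroup I R \<and>
     (\<forall>r\<in>carrier R. \<forall>x\<in>I. r \<otimes>\<^bsub>R\<^esub> x \<in> I)"

definition independent_family :: "('a, 'b) ring_scheme \<Rightarrow> nat \<Rightarrow> (nat \<Rightarrow> 'a set) \<Rightarrow> bool" where
  "independent_family R n I \<longleftrightarrow>
     (\<forall>x. (\<forall>i<n. x i \<in> I i) \<and> finsum R x {..<n} = \<zero>\<^bsub>R\<^esub>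
        \<longrightarrow> (\<forall>i<n. x i = \<zero>\<^bsub>R\<^esub>))"

definition finite_left_udim :: "('a, 'b) ring_scheme \<Rightarrow> bool" where
  "finite_left_udim R \<longleftrightarrow> (\<exists>N::nat. \<forall>n I.
      (\<forall>i<n. left_ideal (I i) R \<and> I i \<noteq> {\<zero>\<^bsub>R\<^esub>}) \<and> independent_family R n I
      \<longrightarrow> n \<le> N)"

definition left_ann :: "('a, 'b) ring_scheme \<Rightarrow> 'a set \<Rightarrow> 'a set" where
  "left_ann R Y = {r. r \<in> carrier R \<and> (\<forall>y\<in>Y. r \<otimes>\<^bsub>R\<^esub> y = \<zero>\<^bsub>R\<^esub>)}"

definition acc_left_ann :: "('a, 'b) ring_scheme \<Rightarrow> bool" where
  "acc_left_ann R \<longleftrightarrow> (\<forall>f :: nat \<Rightarrow> 'a set.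
      (\<forall>n. \<exists>Y. Y \<subseteq> carrier R \<and> f n = left_ann R Y) \<and> (\<forall>n. f n \<subseteq> f (Suc n))
      \<longrightarrow> (\<exists>m. \<forall>n\<ge>m. f n = f m))"

definition left_goldie :: "('a, 'b) ring_scheme \<Rightarrow> bool" where
  "left_goldie R \<longleftrightarrow> finite_left_udim R \<and> acc_left_ann R"

definition nicely_essential :: "'a set \<Rightarrow> ('a, 'b) ring_scheme \<Rightarrow> bool" where
  "nicely_essential A S \<longleftrightarrow> subring A S \<and>
     (\<forall>E. finite E \<and> E \<subseteq> carrier S - {\<zero>\<^bsub>S\<^esub>} \<longrightarrow>
        (\<exists>a\<in>A. \<forall>x\<in>E. a \<otimes>\<^bsub>S\<^esub> x \<noteq> \<zero>\<^bsub>S\<^esub> \<and> a \<otimes>\<^bsub>S\<^esub> x \<in> A))"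

definition left_regular_in :: "'a \<Rightarrow> 'a set \<Rightarrow> ('a, 'b) ring_scheme \<Rightarrow> bool" where
  "left_regular_in c A S \<longleftrightarrow> c \<in> A \<and>
     {a. a \<in> A \<and> a \<otimes>\<^bsub>S\<^esub> c = \<zero>\<^bsub>S\<^esub>} = {\<zero>\<^bsub>S\<^esub>}"

definition strongly_nicely_essential :: "'a set \<Rightarrow> ('a, 'b) ring_scheme \<Rightarrow> bool" where
  "strongly_nicely_essential A S \<longleftrightarrow> nicely_essential A S \<and>
     (\<forall>x\<in>carrier S. \<exists>c. left_regular_in c A S \<and> c \<otimes>\<^bsub>S\<^esub> x \<in> A)"

end

theory Submission
  imports Defs
begin

text \<open>Multiplying finitely many nonzero elements of S on the left by one suitable a \<in> A moves
  them into A without killing them. This lifts primeness and semiprimeness from A to S, and it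
  transports bounds on the length of direct sums R x 1 + ... + R x n of principal left ideals in
  both directions. The ascending chain condition on left annihilators passes to every subring
  via double annihilators. Upwards it is recovered through nonsingularity: a semiprime ring with
  that chain condition is nonsingular, nonsingularity lifts from A to S, and a nonsingular ring
  of finite uniform dimension satisfies the chain condition. Finally, if B is strongly nicely
  essential in a semiprime left Goldie ring S, then a B b = 0 already forces a S b = 0, so
  primeness and semiprimeness descend to B.\<close>

section \<open>Uniform dimension through principal left ideals\<close>

definition left_independent :: "('a, 'b) ring_scheme \<Rightarrow> nat \<Rightarrow> (nat \<Rightarrow> 'a) \<Rightarrow> bool" where
  "left_independent R n x \<longleftrightarrow>
     (\<forall>s. (\<forall>i<n. s i \<in> carrier R) \<and> finsum R (\<lambda>i. s i \<otimes>\<^bsub>R\<^esub> x i) {..<n} = \<zero>\<^bsub>R\<^esub>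
        \<longrightarrow> (\<forall>i<n. s i \<otimes>\<^bsub>R\<^esub> x i = \<zero>\<^bsub>R\<^esub>))"

lemma left_independentD:
  assumes "left_independent R n x" and "\<forall>i<n. s i \<in> carrier R"
    and "finsum R (\<lambda>i. s i \<otimes>\<^bsub>R\<^esub> x i) {..<n} = \<zero>\<^bsub>R\<^esub>" and "i < n"
  shows "s i \<otimes>\<^bsub>R\<^esub> x i = \<zero>\<^bsub>R\<^esub>"
  using assms unfolding left_independent_def by blast

context ring
begin

lemma additive_subgroup_closedI:
  assumes "H \<subseteq> carrier R" "\<zero> \<in> H"
    and "\<And>x y. x \<in> H \<Longrightarrow> y \<in> H \<Longrightarrow> x \<oplus> y \<in> H" and "\<And>x. x \<in> H \<Longrightarrow> \<ominus> x \<in> H"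
  shows "additive_subgroup H R"
  by (rule additive_subgroupI, rule add.subgroupI) (use assms in \<open>auto simp: a_inv_def\<close>)

lemma additive_subgroup_finsum_closed:
  assumes H: "additive_subgroup H R" and f: "\<And>i. i \<in> I \<Longrightarrow> f i \<in> H"
  shows "finsum R f I \<in> H"
  using f
proof (induction I rule: infinite_finite_induct)
  case (insert i I)
  have "f \<in> insert i I \<rightarrow> carrier R"
    using insert.prems additive_subgroup.a_subset[OF H] by blast
  with insert show ?case by (simp add: additive_subgroup.a_closed[OF H])
qed (simp_all add: additive_subgroup.zero_closed[OF H])

lemma finsum_lessThan_Suc:
  assumes "\<And>i. i \<le> n \<Longrightarrow> f i \<in> carrier R"
  shows "finsum R f {..<Suc n} = f n \<oplus> finsum R f {..<n}"
  using assms by (simp add: lessThan_Suc Pi_def)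

lemma finsum_lessThan_Suc_shift:
  assumes "\<And>i. i \<le> n \<Longrightarrow> f i \<in> carrier R"
  shows "finsum R f {..<Suc n} = f 0 \<oplus> finsum R (\<lambda>i. f (Suc i)) {..<n}"
proof -
  have "finsum R f {..<Suc n} = f 0 \<oplus> finsum R f (Suc ` {..<n})"
    unfolding lessThan_Suc_eq_insert_0 using assms by (subst finsum_insert) auto
  also have "finsum R f (Suc ` {..<n}) = finsum R (\<lambda>i. f (Suc i)) {..<n}"
    using assms by (intro finsum_reindex) auto
  finally show ?thesis .
qed

lemma finsum_subring:
  assumes A: "subring A R" and f: "f \<in> I \<rightarrow> A"
  shows "finsum (R\<lparr>carrier := A\<rparr>) f I = finsum R f I"
proof -
  interpret A: ring "R\<lparr>carrier := A\<rparr>" by (rule subring_is_ring[OF A])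
  from f show ?thesis
  proof (induction I rule: infinite_finite_induct)
    case (insert i I)
    then have "f \<in> insert i I \<rightarrow> carrier R" using subringE(1)[OF A] by blast
    with insert show ?case by simp
  qed simp_all
qed

lemma left_ideal_PIdl:
  assumes x: "x \<in> carrier R"
  shows "left_ideal (PIdl x) R"
  unfolding left_ideal_def
proof (intro conjI ballI additive_subgroup_closedI)
  show "PIdl x \<subseteq> carrier R" "\<zero> \<in> PIdl x"
    using x unfolding cgenideal_def by (auto intro!: exI[of _ \<zero>])
next
  fix a b assume "a \<in> PIdl x" "b \<in> PIdl x"
  then obtain s t where "s \<in> carrier R" "t \<in> carrier R" "a = s \<otimes> x" "b = t \<otimes> x"
    unfolding cgenideal_def by blast
  with x show "a \<oplus> b \<in> PIdl x"
    unfolding cgenideal_def by (auto intro!: exI[of _ "s \<oplus> t"] simp: l_distr)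
next
  fix a assume "a \<in> PIdl x"
  then obtain s where "s \<in> carrier R" "a = s \<otimes> x" unfolding cgenideal_def by blast
  with x show "\<ominus> a \<in> PIdl x"
    unfolding cgenideal_def by (auto intro!: exI[of _ "\<ominus> s"] simp: l_minus)
next
  fix r a assume "r \<in> carrier R" "a \<in> PIdl x"
  then obtain s where "r \<in> carrier R" "s \<in> carrier R" "a = s \<otimes> x" unfolding cgenideal_def by blast
  with x show "r \<otimes> a \<in> PIdl x"
    unfolding cgenideal_def by (auto intro!: exI[of _ "r \<otimes> s"] simp: m_assoc)
qed

lemma finite_left_udim_bounds_left_independent:
  assumes "finite_left_udim R"
  shows "\<exists>N. \<forall>n x. (\<forall>i<n. x i \<in> carrier R - {\<zero>}) \<and> left_independent R n x \<longrightarrow> n \<le> N"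
proof -
  obtain N where N: "\<And>n I. (\<forall>i<n. left_ideal (I i) R \<and> I i \<noteq> {\<zero>}) \<and> independent_family R n I \<Longrightarrow> n \<le> N"
    using assms unfolding finite_left_udim_def by blast
  have "n \<le> N" if x: "\<forall>i<n. x i \<in> carrier R - {\<zero>}" and ind: "left_independent R n x" for n x
  proof (rule N[of n "\<lambda>i. PIdl (x i)"], intro conjI allI impI)
    fix i assume "i < n"
    with x show "left_ideal (PIdl (x i)) R" "PIdl (x i) \<noteq> {\<zero>}"
      using left_ideal_PIdl cgenideal_self by blast+
  next
    show "independent_family R n (\<lambda>i. PIdl (x i))"
      unfolding independent_family_def
    proof (intro allI impI)
      fix v i assume v: "(\<forall>i<n. v i \<in> PIdl (x i)) \<and> finsum R v {..<n} = \<zero>" and "i < n"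
      from v have "\<forall>i\<in>{..<n}. \<exists>s. s \<in> carrier R \<and> v i = s \<otimes> x i"
        unfolding cgenideal_def by blast
      then obtain s where s: "\<forall>i\<in>{..<n}. s i \<in> carrier R \<and> v i = s i \<otimes> x i"
        by metis
      have "finsum R (\<lambda>i. s i \<otimes> x i) {..<n} = finsum R v {..<n}"
        using s x by (intro finsum_cong') auto
      then have "s i \<otimes> x i = \<zero>"
        using left_independentD[OF ind] v s \<open>i < n\<close> by simp
      with s \<open>i < n\<close> show "v i = \<zero>" by simp
    qed
  qed
  then show ?thesis by blast
qed

lemma finite_left_udim_if_left_independent_bounded:
  assumes "\<exists>N. \<forall>n x. (\<forall>i<n. x i \<in> carrier R - {\<zero>}) \<and> left_independent R n x \<longrightarrow> n \<le> N"
  shows "finite_left_udim R"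
proof -
  from assms obtain N where N: "\<And>n x. \<forall>i<n. x i \<in> carrier R - {\<zero>} \<Longrightarrow> left_independent R n x \<Longrightarrow> n \<le> N"
    by blast
  show ?thesis
    unfolding finite_left_udim_def
  proof (intro exI allI impI)
    fix n I assume I: "(\<forall>i<n. left_ideal (I i) R \<and> I i \<noteq> {\<zero>}) \<and> independent_family R n I"
    then have "\<forall>i\<in>{..<n}. \<exists>y. y \<in> I i \<and> y \<noteq> \<zero>"
      unfolding left_ideal_def using additive_subgroup.zero_closed by blast
    then obtain x where x: "\<forall>i\<in>{..<n}. x i \<in> I i \<and> x i \<noteq> \<zero>"
      by metis
    have "left_independent R n x"
      unfolding left_independent_def
    proof (intro allI impI)
      fix s i assume s: "(\<forall>i<n. s i \<in> carrier R) \<and> finsum R (\<lambda>i. s i \<otimes> x i) {..<n} = \<zero>"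
        and "i < n"
      moreover have "\<forall>i<n. s i \<otimes> x i \<in> I i"
        using I s x unfolding left_ideal_def by blast
      moreover have "\<forall>v. (\<forall>i<n. v i \<in> I i) \<and> finsum R v {..<n} = \<zero> \<longrightarrow> (\<forall>i<n. v i = \<zero>)"
        using I unfolding independent_family_def by blast
      note this[THEN spec, of "\<lambda>i. s i \<otimes> x i"]
      ultimately show "s i \<otimes> x i = \<zero>" by blast
    qed
    moreover have "\<forall>i<n. x i \<in> carrier R - {\<zero>}"
      using I x additive_subgroup.a_subset unfolding left_ideal_def by blast
    ultimately show "n \<le> N" by (rule N[rotated])
  qed
qed

lemma finite_left_udim_iff:
  "finite_left_udim R \<longleftrightarrow>
     (\<exists>N. \<forall>n x. (\<forall>i<n. x i \<in> carrier R - {\<zero>}) \<and> left_independent R n x \<longrightarrow> n \<le> N)"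
  using finite_left_udim_bounds_left_independent finite_left_udim_if_left_independent_bounded by blast

lemma finite_left_udim_imp_dependent:
  assumes "finite_left_udim R" and "\<And>i. x i \<in> carrier R - {\<zero>}"
  shows "\<exists>n. \<not> left_independent R n x"
proof -
  obtain N where "\<And>n. left_independent R n x \<Longrightarrow> n \<le> N"
    using assms unfolding finite_left_udim_iff by blast
  then show ?thesis by (metis Suc_n_not_le_n)
qed

lemma left_independent_subring_iff:
  assumes A: "subring A R" and x: "\<forall>i<n. x i \<in> A"
  shows "left_independent (R\<lparr>carrier := A\<rparr>) n x \<longleftrightarrow>
    (\<forall>s. (\<forall>i<n. s i \<in> A) \<and> finsum R (\<lambda>i. s i \<otimes> x i) {..<n} = \<zero> \<longrightarrow> (\<forall>i<n. s i \<otimes> x i = \<zero>))"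
proof -
  have "finsum (R\<lparr>carrier := A\<rparr>) (\<lambda>i. s i \<otimes> x i) {..<n} = finsum R (\<lambda>i. s i \<otimes> x i) {..<n}"
    if "\<forall>i<n. s i \<in> A" for s
    using that x subringE(6)[OF A] by (intro finsum_subring[OF A]) (auto simp: Pi_def)
  then have "(\<forall>i<n. s i \<in> A) \<and> finsum (R\<lparr>carrier := A\<rparr>) (\<lambda>i. s i \<otimes> x i) {..<n} = \<zero> \<longleftrightarrow>
      (\<forall>i<n. s i \<in> A) \<and> finsum R (\<lambda>i. s i \<otimes> x i) {..<n} = \<zero>" for s
    by (cases "\<forall>i<n. s i \<in> A") auto
  then show ?thesis unfolding left_independent_def by simp
qed

lemma left_independent_SucI:
  assumes ind: "left_independent R n x" and H: "additive_subgroup H R"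
    and x: "\<And>i. i \<le> n \<Longrightarrow> x i \<in> carrier R"
    and below: "\<And>i s. i < n \<Longrightarrow> s \<in> carrier R \<Longrightarrow> s \<otimes> x i \<in> H"
    and last: "\<And>s. s \<in> carrier R \<Longrightarrow> s \<otimes> x n \<in> H \<Longrightarrow> s \<otimes> x n = \<zero>"
  shows "left_independent R (Suc n) x"
  unfolding left_independent_def
proof (intro allI impI)
  fix s j assume s: "(\<forall>i<Suc n. s i \<in> carrier R) \<and> finsum R (\<lambda>i. s i \<otimes> x i) {..<Suc n} = \<zero>"
    and j: "j < Suc n"
  define sum where "sum = finsum R (\<lambda>i. s i \<otimes> x i) {..<n}"
  have sum_H: "sum \<in> H"
    unfolding sum_def using s by (intro additive_subgroup_finsum_closed[OF H] below) auto
  then have sum_carr: "sum \<in> carrier R" using additive_subgroup.a_subset[OF H] by blast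
  have terms_carr: "s i \<otimes> x i \<in> carrier R" if "i \<le> n" for i
    using s x that by (simp add: less_Suc_eq_le)
  then have last_carr: "s n \<otimes> x n \<in> carrier R" by simp
  have "s n \<otimes> x n \<oplus> sum = \<zero>"
    using s finsum_lessThan_Suc[of n "\<lambda>i. s i \<otimes> x i", OF terms_carr] unfolding sum_def by simp
  then have "s n \<otimes> x n = \<ominus> sum" using minus_equality[OF _ sum_carr last_carr] by simp
  then have "s n \<otimes> x n \<in> H" using sum_H H by (simp add: additive_subgroup.a_inv_closed)
  then have last_zero: "s n \<otimes> x n = \<zero>" using last s by simp
  with \<open>s n \<otimes> x n \<oplus> sum = \<zero>\<close> sum_carr have "sum = \<zero>" by simp
  then have "s i \<otimes> x i = \<zero>" if "i < n" for i
    using left_independentD[OF ind _ _ that] s unfolding sum_def by simp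
  with last_zero j show "s j \<otimes> x j = \<zero>" by (cases "j = n") simp_all
qed

lemma left_independent_ConsI:
  assumes ind: "left_independent R n (\<lambda>i. x (Suc i))" and H: "additive_subgroup H R"
    and x: "\<And>i. i \<le> n \<Longrightarrow> x i \<in> carrier R"
    and rest: "\<And>i s. i < n \<Longrightarrow> s \<in> carrier R \<Longrightarrow> s \<otimes> x (Suc i) \<in> H"
    and first: "\<And>s. s \<in> carrier R \<Longrightarrow> s \<otimes> x 0 \<in> H \<Longrightarrow> s \<otimes> x 0 = \<zero>"
  shows "left_independent R (Suc n) x"
  unfolding left_independent_def
proof (intro allI impI)
  fix s j assume s: "(\<forall>i<Suc n. s i \<in> carrier R) \<and> finsum R (\<lambda>i. s i \<otimes> x i) {..<Suc n} = \<zero>"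
    and j: "j < Suc n"
  define sum where "sum = finsum R (\<lambda>i. s (Suc i) \<otimes> x (Suc i)) {..<n}"
  have sum_H: "sum \<in> H"
    unfolding sum_def using s by (intro additive_subgroup_finsum_closed[OF H] rest) auto
  then have sum_carr: "sum \<in> carrier R" using additive_subgroup.a_subset[OF H] by blast
  have terms_carr: "s i \<otimes> x i \<in> carrier R" if "i \<le> n" for i
    using s x that by (simp add: less_Suc_eq_le)
  then have first_carr: "s 0 \<otimes> x 0 \<in> carrier R" by simp
  have "s 0 \<otimes> x 0 \<oplus> sum = \<zero>"
    using s finsum_lessThan_Suc_shift[of n "\<lambda>i. s i \<otimes> x i", OF terms_carr] unfolding sum_def by simp
  then have "s 0 \<otimes> x 0 = \<ominus> sum" using minus_equality[OF _ sum_carr first_carr] by simp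
  then have "s 0 \<otimes> x 0 \<in> H" using sum_H H by (simp add: additive_subgroup.a_inv_closed)
  then have first_zero: "s 0 \<otimes> x 0 = \<zero>" using first s by simp
  with \<open>s 0 \<otimes> x 0 \<oplus> sum = \<zero>\<close> sum_carr have "sum = \<zero>" by simp
  then have "s (Suc i) \<otimes> x (Suc i) = \<zero>" if "i < n" for i
    using left_independentD[OF ind _ _ that, of "\<lambda>i. s (Suc i)"] s that unfolding sum_def by simp
  with first_zero j show "s j \<otimes> x j = \<zero>" by (cases j) simp_all
qed

lemma left_independent_mult_right:
  assumes ind: "left_independent R n x" and x: "\<And>i. i < n \<Longrightarrow> x i \<in> carrier R"
    and c: "c \<in> carrier R" and regular: "\<And>t. t \<in> carrier R \<Longrightarrow> t \<otimes> c = \<zero> \<Longrightarrow> t = \<zero>"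
  shows "left_independent R n (\<lambda>i. x i \<otimes> c)"
  unfolding left_independent_def
proof (intro allI impI)
  fix s j assume s: "(\<forall>i<n. s i \<in> carrier R) \<and> finsum R (\<lambda>i. s i \<otimes> (x i \<otimes> c)) {..<n} = \<zero>"
    and j: "j < n"
  have "finsum R (\<lambda>i. s i \<otimes> x i) {..<n} \<otimes> c = finsum R (\<lambda>i. s i \<otimes> x i \<otimes> c) {..<n}"
    using s x c by (intro finsum_ldistr) auto
  also have "\<dots> = finsum R (\<lambda>i. s i \<otimes> (x i \<otimes> c)) {..<n}"
    using s x c by (intro finsum_cong') (auto simp: m_assoc)
  finally have "finsum R (\<lambda>i. s i \<otimes> x i) {..<n} \<otimes> c = \<zero>" using s by simp
  then have "finsum R (\<lambda>i. s i \<otimes> x i) {..<n} = \<zero>"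
    by (rule regular[OF finsum_closed, rotated]) (use s x in auto)
  then have "s j \<otimes> x j = \<zero>" using left_independentD[OF ind _ _ j] s by blast
  then show "s j \<otimes> (x j \<otimes> c) = \<zero>" using s x c j by (simp add: m_assoc[symmetric])
qed

lemma additive_subgroup_mult_right_image:
  assumes L: "additive_subgroup L R" and c: "c \<in> carrier R"
  shows "additive_subgroup ((\<lambda>l. l \<otimes> c) ` L) R"
proof (rule additive_subgroup_closedI)
  have L_sub: "L \<subseteq> carrier R" using additive_subgroup.a_subset[OF L] .
  then show "(\<lambda>l. l \<otimes> c) ` L \<subseteq> carrier R" using c by auto
  have "\<zero> \<otimes> c \<in> (\<lambda>l. l \<otimes> c) ` L" using additive_subgroup.zero_closed[OF L] by blast
  then show "\<zero> \<in> (\<lambda>l. l \<otimes> c) ` L" using c by simp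
  show "a \<oplus> b \<in> (\<lambda>l. l \<otimes> c) ` L"
    if a: "a \<in> (\<lambda>l. l \<otimes> c) ` L" and b: "b \<in> (\<lambda>l. l \<otimes> c) ` L" for a b
  proof -
    obtain l l' where l: "l \<in> L" "l' \<in> L" and ab: "a = l \<otimes> c" "b = l' \<otimes> c" using a b by blast
    have "(l \<oplus> l') \<otimes> c \<in> (\<lambda>l. l \<otimes> c) ` L" using additive_subgroup.a_closed[OF L l] by blast
    then show ?thesis using l L_sub c by (simp add: ab l_distr subset_eq)
  qed
  show "\<ominus> a \<in> (\<lambda>l. l \<otimes> c) ` L" if a_mem: "a \<in> (\<lambda>l. l \<otimes> c) ` L" for a
  proof -
    obtain l where l: "l \<in> L" and a: "a = l \<otimes> c" using a_mem by blast
    have "(\<ominus> l) \<otimes> c \<in> (\<lambda>l. l \<otimes> c) ` L" using additive_subgroup.a_inv_closed[OF L l] by blast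
    then show ?thesis using l L_sub c by (simp add: a l_minus subset_eq)
  qed
qed

lemma left_independent_right_powers:
  assumes c: "c \<in> carrier R" and regular: "\<And>t. t \<in> carrier R \<Longrightarrow> t \<otimes> c = \<zero> \<Longrightarrow> t = \<zero>"
    and L: "left_ideal L R" "\<And>t. t \<in> L \<Longrightarrow> t \<otimes> c \<in> L" and t: "t \<in> L"
    and disjoint: "\<And>u t'. u \<in> carrier R \<Longrightarrow> t' \<in> L \<Longrightarrow> u \<otimes> t = t' \<otimes> c \<Longrightarrow> u \<otimes> t = \<zero>"
  shows "left_independent R n (\<lambda>i. t \<otimes> c [^] i)"
proof (induction n)
  case 0
  show ?case by (simp add: left_independent_def)
next
  case (Suc n)
  have L_sub: "L \<subseteq> carrier R" and L_add: "additive_subgroup L R"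
    and L_mult: "\<And>s t. s \<in> carrier R \<Longrightarrow> t \<in> L \<Longrightarrow> s \<otimes> t \<in> L"
    using L(1) additive_subgroup.a_subset unfolding left_ideal_def by blast+
  define x where "x i = t \<otimes> c [^] i" for i :: nat
  have t_carr: "t \<in> carrier R" using t L_sub by blast
  have x_Suc: "x (Suc i) = x i \<otimes> c" for i
    using t_carr c by (simp add: x_def m_assoc)
  have x_L: "x i \<in> L" for i
  proof (induction i)
    case 0
    show ?case using t t_carr by (simp add: x_def)
  next
    case (Suc i)
    then show ?case using L(2) by (simp add: x_Suc)
  qed
  then have x_carr: "x i \<in> carrier R" for i using L_sub by blast
  define Lc where "Lc = (\<lambda>l. l \<otimes> c) ` L"
  show ?case
    unfolding x_def[symmetric]
  proof (rule left_independent_ConsI[where H = Lc])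
    have "left_independent R n (\<lambda>i. x i \<otimes> c)"
      by (rule left_independent_mult_right[OF Suc.IH[folded x_def] x_carr c]) (rule regular)
    then show "left_independent R n (\<lambda>i. x (Suc i))" by (simp add: x_Suc)
    show "additive_subgroup Lc R"
      unfolding Lc_def using L_add c by (rule additive_subgroup_mult_right_image)
    show "s \<otimes> x (Suc i) \<in> Lc" if "s \<in> carrier R" for i s
    proof -
      have "(s \<otimes> x i) \<otimes> c \<in> Lc" unfolding Lc_def using L_mult[OF that x_L] by blast
      then show ?thesis using that x_carr c by (simp add: x_Suc m_assoc)
    qed
    show "s \<otimes> x 0 = \<zero>" if s: "s \<in> carrier R" "s \<otimes> x 0 \<in> Lc" for s
    proof -
      obtain l where "l \<in> L" "s \<otimes> t = l \<otimes> c" using s t_carr unfolding Lc_def by (auto simp: x_def)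
      then show ?thesis using disjoint s(1) t_carr by (simp add: x_def)
    qed
  qed (rule x_carr)
qed

text \<open>Otherwise R t, R t c, R t c c, ... would form an infinite direct sum.\<close>
lemma left_regular_right_mult_essential:
  assumes udim: "finite_left_udim R" and c: "c \<in> carrier R"
    and regular: "\<And>t. t \<in> carrier R \<Longrightarrow> t \<otimes> c = \<zero> \<Longrightarrow> t = \<zero>"
    and L: "left_ideal L R" "\<And>t. t \<in> L \<Longrightarrow> t \<otimes> c \<in> L" and t: "t \<in> L" "t \<noteq> \<zero>"
  shows "\<exists>u\<in>carrier R. u \<otimes> t \<noteq> \<zero> \<and> (\<exists>t'\<in>L. u \<otimes> t = t' \<otimes> c)"
proof (rule ccontr)
  assume "\<not> ?thesis"
  then have disjoint: "\<And>u t'. u \<in> carrier R \<Longrightarrow> t' \<in> L \<Longrightarrow> u \<otimes> t = t' \<otimes> c \<Longrightarrow> u \<otimes> t = \<zero>"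
    by blast
  have t_carr: "t \<in> carrier R"
    using L(1) t additive_subgroup.a_subset unfolding left_ideal_def by blast
  have "t \<otimes> c [^] i \<in> carrier R - {\<zero>}" for i :: nat
  proof (induction i)
    case 0
    show ?case using t t_carr by simp
  next
    case (Suc i)
    then show ?case using regular[of "t \<otimes> c [^] i"] c t_carr by (auto simp: m_assoc[symmetric])
  qed
  then obtain n where "\<not> left_independent R n (\<lambda>i. t \<otimes> c [^] i)"
    using finite_left_udim_imp_dependent[OF udim, of "\<lambda>i. t \<otimes> c [^] i"] by blast
  moreover have "left_independent R n (\<lambda>i. t \<otimes> c [^] i)"
    by (rule left_independent_right_powers[OF c _ L(1) _ t(1)]) (use regular L(2) disjoint in blast)+
  ultimately show False by contradiction
qed

end

section \<open>Left annihilators\<close>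

definition left_ann_strict_chain :: "('a, 'b) ring_scheme \<Rightarrow> (nat \<Rightarrow> 'a set) \<Rightarrow> bool" where
  "left_ann_strict_chain R Y \<longleftrightarrow>
     (\<forall>k. Y k \<subseteq> carrier R) \<and> (\<forall>k. left_ann R (Y k) \<subset> left_ann R (Y (Suc k)))"

lemma non_stabilizing_chain_strict_subseq:
  fixes f :: "nat \<Rightarrow> 'a::order"
  assumes mono: "\<And>n. f n \<le> f (Suc n)" and not_stable: "\<not> (\<exists>m. \<forall>n\<ge>m. f n = f m)"
  obtains g where "\<And>k. f (g k) < f (g (Suc k))"
proof -
  have "\<exists>n. f m < f n" for m
  proof -
    obtain n where "m \<le> n" "f n \<noteq> f m" using not_stable by blast
    with lift_Suc_mono_le[of f, OF mono] show ?thesis by (metis order_less_le)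
  qed
  then obtain next_greater where "\<And>m. f m < f (next_greater m)" by metis
  then have "f ((next_greater ^^ k) 0) < f ((next_greater ^^ Suc k) 0)" for k by simp
  then show thesis by (rule that)
qed

context ring
begin

lemma left_ann_closed: "left_ann R Y \<subseteq> carrier R"
  by (auto simp: left_ann_def)

lemma left_ann_mult_closed:
  assumes "Y \<subseteq> carrier R" "s \<in> carrier R" "t \<in> left_ann R Y"
  shows "s \<otimes> t \<in> left_ann R Y"
  using assms by (auto simp: left_ann_def m_assoc subset_eq)

lemma additive_subgroup_left_ann:
  assumes Y: "Y \<subseteq> carrier R"
  shows "additive_subgroup (left_ann R Y) R"
proof (rule additive_subgroup_closedI[OF left_ann_closed])
  show "\<zero> \<in> left_ann R Y" using Y by (auto simp: left_ann_def)
  show "x \<oplus> y \<in> left_ann R Y" if "x \<in> left_ann R Y" "y \<in> left_ann R Y" for x y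
    using that Y by (auto simp: left_ann_def l_distr subset_eq)
  show "\<ominus> x \<in> left_ann R Y" if "x \<in> left_ann R Y" for x
    using that Y by (auto simp: left_ann_def l_minus subset_eq)
qed

lemma left_ideal_left_ann:
  assumes "Y \<subseteq> carrier R"
  shows "left_ideal (left_ann R Y) R"
  unfolding left_ideal_def using additive_subgroup_left_ann left_ann_mult_closed assms by blast

lemma acc_left_ann_iff: "acc_left_ann R \<longleftrightarrow> \<not> (\<exists>Y. left_ann_strict_chain R Y)"
proof
  assume acc: "acc_left_ann R"
  show "\<not> (\<exists>Y. left_ann_strict_chain R Y)"
  proof
    assume "\<exists>Y. left_ann_strict_chain R Y"
    then obtain Y where Y: "\<And>k. Y k \<subseteq> carrier R"
      and strict: "\<And>k. left_ann R (Y k) \<subset> left_ann R (Y (Suc k))"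
      unfolding left_ann_strict_chain_def by blast
    have "(\<forall>k. \<exists>Z. Z \<subseteq> carrier R \<and> left_ann R (Y k) = left_ann R Z)
        \<and> (\<forall>k. left_ann R (Y k) \<subseteq> left_ann R (Y (Suc k)))"
      using Y strict by blast
    then obtain m where "\<forall>n\<ge>m. left_ann R (Y n) = left_ann R (Y m)"
      using acc[unfolded acc_left_ann_def, THEN spec[of _ "\<lambda>k. left_ann R (Y k)"]] by blast
    then have "left_ann R (Y (Suc m)) = left_ann R (Y m)" by (meson le_SucI order_refl)
    with strict[of m] show False by simp
  qed
next
  assume no_chain: "\<not> (\<exists>Y. left_ann_strict_chain R Y)"
  show "acc_left_ann R"
    unfolding acc_left_ann_def
  proof (intro allI impI, rule ccontr)
    fix f :: "nat \<Rightarrow> 'a set"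
    assume f: "(\<forall>n. \<exists>Y. Y \<subseteq> carrier R \<and> f n = left_ann R Y) \<and> (\<forall>n. f n \<subseteq> f (Suc n))"
      and "\<not> (\<exists>m. \<forall>n\<ge>m. f n = f m)"
    then obtain g where g: "\<And>k. f (g k) \<subset> f (g (Suc k))"
      using non_stabilizing_chain_strict_subseq[of f] by blast
    from f have "\<forall>n. \<exists>Y. Y \<subseteq> carrier R \<and> f n = left_ann R Y" by blast
    from choice[OF this] obtain Y where Y: "\<And>n. Y n \<subseteq> carrier R" "\<And>n. f n = left_ann R (Y n)"
      by blast
    have "left_ann_strict_chain R (\<lambda>k. Y (g k))"
      unfolding left_ann_strict_chain_def using Y g by simp
    with no_chain show False by blast
  qed
qed

lemma acc_left_ann_maximal:
  assumes acc: "acc_left_ann R" and "P z0" and carrier: "\<And>z. P z \<Longrightarrow> z \<in> carrier R"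
  obtains z where "P z"
    and "\<And>z'. P z' \<Longrightarrow> left_ann R {z} \<subseteq> left_ann R {z'} \<Longrightarrow> left_ann R {z'} = left_ann R {z}"
proof -
  have "\<exists>z. P z \<and> (\<forall>z'. P z' \<and> left_ann R {z} \<subseteq> left_ann R {z'} \<longrightarrow> left_ann R {z'} = left_ann R {z})"
  proof (rule ccontr)
    assume "\<not> ?thesis"
    then have "\<forall>z. \<exists>z'. P z \<longrightarrow> P z' \<and> left_ann R {z} \<subset> left_ann R {z'}" by blast
    then obtain bigger where bigger: "\<And>z. P z \<Longrightarrow> P (bigger z) \<and> left_ann R {z} \<subset> left_ann R {bigger z}"
      by metis
    define z where "z n = (bigger ^^ n) z0" for n
    have "P (z n)" for n by (induction n) (simp_all add: z_def \<open>P z0\<close> bigger)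
    then have "left_ann_strict_chain R (\<lambda>k. {z k})"
      unfolding left_ann_strict_chain_def using bigger carrier by (simp add: z_def)
    with acc show False unfolding acc_left_ann_iff by blast
  qed
  with that show thesis by blast
qed

lemma left_ann_subring:
  assumes "A \<subseteq> carrier R"
  shows "left_ann (R\<lparr>carrier := A\<rparr>) Y = A \<inter> left_ann R Y"
  using assms by (auto simp: left_ann_def)

text \<open>Double annihilators: a left annihilator of the subring is cut out of one of the whole ring.\<close>
lemma left_ann_double_ann_subring:
  assumes "A \<subseteq> carrier R" "Y \<subseteq> A"
  shows "A \<inter> left_ann R {y \<in> A. \<forall>r \<in> A \<inter> left_ann R Y. r \<otimes> y = \<zero>} = A \<inter> left_ann R Y"
proof
  have "Y \<subseteq> {y \<in> A. \<forall>r \<in> A \<inter> left_ann R Y. r \<otimes> y = \<zero>}"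
    using assms(2) by (auto simp: left_ann_def)
  then show "A \<inter> left_ann R {y \<in> A. \<forall>r \<in> A \<inter> left_ann R Y. r \<otimes> y = \<zero>} \<subseteq> A \<inter> left_ann R Y"
    by (auto simp: left_ann_def)
  show "A \<inter> left_ann R Y \<subseteq> A \<inter> left_ann R {y \<in> A. \<forall>r \<in> A \<inter> left_ann R Y. r \<otimes> y = \<zero>}"
    using assms(1) by (auto simp: left_ann_def)
qed

lemma acc_left_ann_subring:
  assumes A: "subring A R" and acc: "acc_left_ann R"
  shows "acc_left_ann (R\<lparr>carrier := A\<rparr>)"
proof -
  interpret A: ring "R\<lparr>carrier := A\<rparr>" by (rule subring_is_ring[OF A])
  have A_sub: "A \<subseteq> carrier R" using subringE(1)[OF A] .
  show ?thesis
    unfolding A.acc_left_ann_iff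
  proof
    assume "\<exists>Y. left_ann_strict_chain (R\<lparr>carrier := A\<rparr>) Y"
    then obtain Y where Y: "\<And>k. Y k \<subseteq> A"
      and strict: "\<And>k. A \<inter> left_ann R (Y k) \<subset> A \<inter> left_ann R (Y (Suc k))"
      unfolding left_ann_strict_chain_def left_ann_subring[OF A_sub] by auto
    define Y' where "Y' k = {y \<in> A. \<forall>r \<in> A \<inter> left_ann R (Y k). r \<otimes> y = \<zero>}" for k
    have restrict: "A \<inter> left_ann R (Y' k) = A \<inter> left_ann R (Y k)" for k
      unfolding Y'_def using left_ann_double_ann_subring[OF A_sub Y] .
    have "left_ann R (Y' k) \<subset> left_ann R (Y' (Suc k))" for k
    proof -
      have "Y' (Suc k) \<subseteq> Y' k" using strict[of k] by (auto simp: Y'_def)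
      then have "left_ann R (Y' k) \<subseteq> left_ann R (Y' (Suc k))" by (auto simp: left_ann_def)
      moreover have "left_ann R (Y' k) \<noteq> left_ann R (Y' (Suc k))"
        using strict[of k] restrict[of k] restrict[of "Suc k"] by auto
      ultimately show ?thesis by blast
    qed
    moreover have "Y' k \<subseteq> carrier R" for k using A_sub by (auto simp: Y'_def)
    ultimately have "left_ann_strict_chain R Y'" unfolding left_ann_strict_chain_def by blast
    with acc show False unfolding acc_left_ann_iff by blast
  qed
qed

end

section \<open>Nonsingular rings\<close>

text \<open>z is left singular iff its left annihilator is essential, i.e. meets every nonzero
  principal left ideal R b.\<close>
definition left_singular :: "('a, 'b) ring_scheme \<Rightarrow> 'a \<Rightarrow> bool" where
  "left_singular R z \<longleftrightarrow> (\<forall>b\<in>carrier R. b \<noteq> \<zero>\<^bsub>R\<^esub> \<longrightarrow>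
     (\<exists>d\<in>carrier R. d \<otimes>\<^bsub>R\<^esub> b \<noteq> \<zero>\<^bsub>R\<^esub> \<and> d \<otimes>\<^bsub>R\<^esub> b \<otimes>\<^bsub>R\<^esub> z = \<zero>\<^bsub>R\<^esub>))"

definition left_nonsingular :: "('a, 'b) ring_scheme \<Rightarrow> bool" where
  "left_nonsingular R \<longleftrightarrow> (\<forall>z\<in>carrier R. left_singular R z \<longrightarrow> z = \<zero>\<^bsub>R\<^esub>)"

context ring
begin

lemma left_singular_mult_right:
  assumes "left_singular R z" "z \<in> carrier R" "r \<in> carrier R"
  shows "left_singular R (z \<otimes> r)"
  unfolding left_singular_def
proof (intro ballI impI)
  fix b assume b: "b \<in> carrier R" "b \<noteq> \<zero>"
  then obtain d where d: "d \<in> carrier R" "d \<otimes> b \<noteq> \<zero>" "d \<otimes> b \<otimes> z = \<zero>"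
    using assms(1) unfolding left_singular_def by blast
  have "d \<otimes> b \<otimes> (z \<otimes> r) = (d \<otimes> b \<otimes> z) \<otimes> r"
    using d(1) b(1) assms(2,3) by (simp add: m_assoc)
  with d assms(3) show "\<exists>d\<in>carrier R. d \<otimes> b \<noteq> \<zero> \<and> d \<otimes> b \<otimes> (z \<otimes> r) = \<zero>"
    by auto
qed

lemma left_singular_left_ann_square:
  assumes "left_singular R w" "w \<in> carrier R" "w \<noteq> \<zero>"
  shows "left_ann R {w \<otimes> w} \<noteq> left_ann R {w}"
proof
  assume eq: "left_ann R {w \<otimes> w} = left_ann R {w}"
  obtain d where d: "d \<in> carrier R" "d \<otimes> w \<noteq> \<zero>" "d \<otimes> w \<otimes> w = \<zero>"
    using assms unfolding left_singular_def by blast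
  then have "d \<in> left_ann R {w \<otimes> w}" using assms(2) by (simp add: left_ann_def m_assoc)
  then have "d \<in> left_ann R {w}" by (simp only: eq)
  with d(2) show False by (simp add: left_ann_def)
qed

text \<open>Take a nonzero singular z whose left annihilator l(z) is maximal. Every nonzero w = z r is
  singular with l(w) = l(z) = l(w w) unless w w = 0, so w w = 0 and w \<in> l(w) = l(z): z R z = 0.\<close>
lemma semiprime_acc_left_ann_imp_left_nonsingular:
  assumes semiprime: "semiprime_ring R" and acc: "acc_left_ann R"
  shows "left_nonsingular R"
proof (rule ccontr)
  let ?P = "\<lambda>z. z \<in> carrier R \<and> left_singular R z \<and> z \<noteq> \<zero>"
  assume "\<not> left_nonsingular R"
  then obtain z0 where "?P z0" unfolding left_nonsingular_def by blast
  then obtain z where z: "?P z"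
    and max: "\<And>z'. ?P z' \<Longrightarrow> left_ann R {z} \<subseteq> left_ann R {z'} \<Longrightarrow> left_ann R {z'} = left_ann R {z}"
    using acc_left_ann_maximal[OF acc, of ?P z0] by blast
  have ann_eq: "left_ann R {z \<otimes> r} = left_ann R {z}" if r: "r \<in> carrier R" "z \<otimes> r \<noteq> \<zero>" for r
  proof (rule max)
    show "?P (z \<otimes> r)" using z r left_singular_mult_right by blast
    show "left_ann R {z} \<subseteq> left_ann R {z \<otimes> r}"
      using z r by (auto simp: left_ann_def m_assoc[symmetric])
  qed
  have "z \<otimes> r \<otimes> z = \<zero>" if r: "r \<in> carrier R" for r
  proof (cases "z \<otimes> r = \<zero>")
    case True
    with z show ?thesis by simp
  next
    case False
    define w where "w = z \<otimes> r"
    have w: "w \<in> carrier R" "w \<noteq> \<zero>" "left_singular R w" "left_ann R {w} = left_ann R {z}"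
      using z r False ann_eq left_singular_mult_right unfolding w_def by auto
    have "w \<otimes> w = \<zero>"
    proof (rule ccontr)
      assume "w \<otimes> w \<noteq> \<zero>"
      moreover have "w \<otimes> w = z \<otimes> (r \<otimes> w)" using z r w by (simp add: w_def m_assoc)
      ultimately have "left_ann R {w \<otimes> w} = left_ann R {w}"
        using ann_eq[of "r \<otimes> w"] r w by simp
      with left_singular_left_ann_square[OF w(3,1,2)] show False by contradiction
    qed
    then have "w \<in> left_ann R {w}" using w(1) by (simp add: left_ann_def)
    then have "w \<in> left_ann R {z}" using w(4) by simp
    then show ?thesis by (simp add: left_ann_def w_def)
  qed
  then have "z = \<zero>" using semiprime z unfolding semiprime_ring_def by blast
  with z show False by simp
qed

lemma left_nonsingular_left_ann_complement:
  assumes nonsingular: "left_nonsingular R" and Y: "Y \<subseteq> carrier R"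
    and M: "left_ideal M R" and not_sub: "\<not> M \<subseteq> left_ann R Y"
  shows "\<exists>x\<in>M. x \<noteq> \<zero> \<and> (\<forall>s\<in>carrier R. s \<otimes> x \<in> left_ann R Y \<longrightarrow> s \<otimes> x = \<zero>)"
proof -
  have M_sub: "M \<subseteq> carrier R"
    using M additive_subgroup.a_subset unfolding left_ideal_def by blast
  obtain x0 y where x0: "x0 \<in> M" and y: "y \<in> Y" "x0 \<otimes> y \<noteq> \<zero>"
    using not_sub M_sub by (auto simp: left_ann_def)
  have x0_carr: "x0 \<in> carrier R" and y_carr: "y \<in> carrier R" using x0 y M_sub Y by auto
  have "\<not> left_singular R (x0 \<otimes> y)"
    using nonsingular y x0_carr y_carr unfolding left_nonsingular_def by auto
  then obtain b where b: "b \<in> carrier R" "b \<noteq> \<zero>"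
    and faithful: "\<And>d. d \<in> carrier R \<Longrightarrow> d \<otimes> b \<noteq> \<zero> \<Longrightarrow> d \<otimes> b \<otimes> (x0 \<otimes> y) \<noteq> \<zero>"
    unfolding left_singular_def by blast
  have "b \<otimes> x0 \<in> M" using M b x0 unfolding left_ideal_def by blast
  moreover have "b \<otimes> x0 \<noteq> \<zero>"
  proof -
    have "\<one> \<otimes> b \<otimes> (x0 \<otimes> y) \<noteq> \<zero>" using faithful[of \<one>] b by simp
    then show ?thesis using b x0_carr y_carr by (metis l_one l_null m_assoc)
  qed
  moreover have "s \<otimes> (b \<otimes> x0) = \<zero>" if s: "s \<in> carrier R" "s \<otimes> (b \<otimes> x0) \<in> left_ann R Y" for s
  proof -
    have "s \<otimes> b \<otimes> (x0 \<otimes> y) = \<zero>"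
      using s y b x0_carr y_carr by (auto simp: left_ann_def m_assoc)
    then have "s \<otimes> b = \<zero>" using faithful[of s] s b by auto
    then show ?thesis using s b x0_carr by (simp add: m_assoc[symmetric])
  qed
  ultimately show ?thesis by blast
qed

lemma left_nonsingular_strict_chain_independent:
  assumes nonsingular: "left_nonsingular R" and chain: "left_ann_strict_chain R Y"
  obtains x where "\<And>k. x k \<in> carrier R - {\<zero>}" and "\<And>n. left_independent R n x"
proof -
  have Y: "\<And>k. Y k \<subseteq> carrier R" and strict: "\<And>k. left_ann R (Y k) \<subset> left_ann R (Y (Suc k))"
    using chain unfolding left_ann_strict_chain_def by blast+
  have mono: "left_ann R (Y i) \<subseteq> left_ann R (Y k)" if "i \<le> k" for i k
    using lift_Suc_mono_le[of "\<lambda>k. left_ann R (Y k)", OF psubset_imp_subset[OF strict] that] .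
  have "\<forall>k. \<exists>x. x \<in> left_ann R (Y (Suc k)) \<and> x \<noteq> \<zero> \<and>
      (\<forall>s\<in>carrier R. s \<otimes> x \<in> left_ann R (Y k) \<longrightarrow> s \<otimes> x = \<zero>)"
  proof
    fix k
    have "\<not> left_ann R (Y (Suc k)) \<subseteq> left_ann R (Y k)" using strict[of k] by blast
    with left_nonsingular_left_ann_complement[OF nonsingular Y[of k] left_ideal_left_ann[OF Y[of "Suc k"]]]
    show "\<exists>x. x \<in> left_ann R (Y (Suc k)) \<and> x \<noteq> \<zero> \<and>
      (\<forall>s\<in>carrier R. s \<otimes> x \<in> left_ann R (Y k) \<longrightarrow> s \<otimes> x = \<zero>)" by blast
  qed
  from choice[OF this] obtain x where x: "\<And>k. x k \<in> left_ann R (Y (Suc k))" "\<And>k. x k \<noteq> \<zero>"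
    and complement: "\<And>k s. s \<in> carrier R \<Longrightarrow> s \<otimes> x k \<in> left_ann R (Y k) \<Longrightarrow> s \<otimes> x k = \<zero>"
    by blast
  have x_carr: "x k \<in> carrier R" for k using x(1) left_ann_closed by blast
  have indep: "left_independent R n x" for n
  proof (induction n)
    case 0
    show ?case by (simp add: left_independent_def)
  next
    case (Suc n)
    show ?case
    proof (rule left_independent_SucI[OF Suc.IH additive_subgroup_left_ann[OF Y] x_carr])
      fix i s assume "i < n" and s: "s \<in> carrier R"
      then have "x i \<in> left_ann R (Y n)" using x(1)[of i] mono[of "Suc i" n] by auto
      then show "s \<otimes> x i \<in> left_ann R (Y n)" by (rule left_ann_mult_closed[OF Y s])
    qed (rule complement)
  qed
  show thesis by (rule that[of x]) (use x(2) x_carr indep in auto)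
qed

text \<open>Since L c is essential in L, every nonzero left multiple of t has a nonzero left multiple
  in L c, which z kills.\<close>
lemma left_regular_essential_imp_left_singular:
  assumes udim: "finite_left_udim R" and c: "c \<in> carrier R"
    and regular: "\<And>t. t \<in> carrier R \<Longrightarrow> t \<otimes> c = \<zero> \<Longrightarrow> t = \<zero>"
    and L: "left_ideal L R" "\<And>t. t \<in> L \<Longrightarrow> t \<otimes> c \<in> L" and t: "t \<in> L"
    and z: "z \<in> carrier R" and kills: "\<And>t'. t' \<in> L \<Longrightarrow> t' \<otimes> c \<otimes> z = \<zero>"
  shows "left_singular R (t \<otimes> z)"
  unfolding left_singular_def
proof (intro ballI impI)
  have L_sub: "L \<subseteq> carrier R"
    using L(1) additive_subgroup.a_subset unfolding left_ideal_def by blast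
  then have t_carr: "t \<in> carrier R" using t by blast
  fix b assume b: "b \<in> carrier R" "b \<noteq> \<zero>"
  show "\<exists>d\<in>carrier R. d \<otimes> b \<noteq> \<zero> \<and> d \<otimes> b \<otimes> (t \<otimes> z) = \<zero>"
  proof (cases "b \<otimes> t = \<zero>")
    case True
    then have "\<one> \<otimes> b \<otimes> (t \<otimes> z) = \<zero>" using b t_carr z by (simp add: m_assoc[symmetric])
    with b show ?thesis by (intro bexI[of _ \<one>]) simp_all
  next
    case False
    have "b \<otimes> t \<in> L" using L(1) b(1) t unfolding left_ideal_def by blast
    then obtain u t' where u: "u \<in> carrier R" "u \<otimes> (b \<otimes> t) \<noteq> \<zero>"
      and t': "t' \<in> L" "u \<otimes> (b \<otimes> t) = t' \<otimes> c"
      using left_regular_right_mult_essential[OF udim c _ L(1) _ _ False] regular L(2) by blast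
    have "u \<otimes> b \<otimes> (t \<otimes> z) = u \<otimes> (b \<otimes> t) \<otimes> z"
      using u b t_carr z by (simp add: m_assoc)
    also have "\<dots> = \<zero>" using t' kills by simp
    finally have "u \<otimes> b \<otimes> (t \<otimes> z) = \<zero>" .
    moreover have "u \<otimes> b \<noteq> \<zero>" using u b t_carr by (metis l_null m_assoc)
    ultimately show ?thesis using u b by blast
  qed
qed

lemma left_nonsingular_finite_left_udim_imp_acc:
  assumes nonsingular: "left_nonsingular R" and udim: "finite_left_udim R"
  shows "acc_left_ann R"
  unfolding acc_left_ann_iff
proof
  assume "\<exists>Y. left_ann_strict_chain R Y"
  then obtain x where "\<And>k. x k \<in> carrier R - {\<zero>}" and "\<And>n. left_independent R n x"
    using left_nonsingular_strict_chain_independent[OF nonsingular] by blast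
  with finite_left_udim_imp_dependent[OF udim] show False by blast
qed

end

section \<open>Nicely essential subrings\<close>

lemma prime_ring_imp_semiprime_ring: "prime_ring R \<Longrightarrow> semiprime_ring R"
  unfolding prime_ring_def semiprime_ring_def by blast

lemma nicely_essential_imp_subring: "nicely_essential A R \<Longrightarrow> subring A R"
  unfolding nicely_essential_def by blast

lemma nicely_essentialD:
  assumes "nicely_essential A R" "finite E" "E \<subseteq> carrier R - {\<zero>\<^bsub>R\<^esub>}"
  shows "\<exists>a\<in>A. \<forall>x\<in>E. a \<otimes>\<^bsub>R\<^esub> x \<noteq> \<zero>\<^bsub>R\<^esub> \<and> a \<otimes>\<^bsub>R\<^esub> x \<in> A"
  using assms unfolding nicely_essential_def by blast

context ring
begin

lemma nicely_essential_single:
  assumes "nicely_essential A R" "x \<in> carrier R" "x \<noteq> \<zero>"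
  shows "\<exists>a\<in>A. a \<otimes> x \<noteq> \<zero> \<and> a \<otimes> x \<in> A"
  using nicely_essentialD[of A R "{x}"] assms by auto

lemma nicely_essential_prime_lift:
  assumes ne: "nicely_essential A R" and prime: "prime_ring (R\<lparr>carrier := A\<rparr>)"
  shows "prime_ring R"
  unfolding prime_ring_def
proof (intro conjI ballI impI)
  have A_sub: "A \<subseteq> carrier R" using subringE(1)[OF nicely_essential_imp_subring[OF ne]] .
  show "\<one> \<noteq> \<zero>" using prime unfolding prime_ring_def by simp
  fix a b assume a: "a \<in> carrier R" and b: "b \<in> carrier R"
    and zero: "\<forall>r\<in>carrier R. a \<otimes> r \<otimes> b = \<zero>"
  show "a = \<zero> \<or> b = \<zero>"
  proof (rule ccontr)
    assume "\<not> (a = \<zero> \<or> b = \<zero>)"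
    then obtain a' b' where a': "a' \<in> A" "a' \<otimes> a \<noteq> \<zero>" "a' \<otimes> a \<in> A"
      and b': "b' \<in> A" "b' \<otimes> b \<noteq> \<zero>" "b' \<otimes> b \<in> A"
      using nicely_essential_single[OF ne a] nicely_essential_single[OF ne b] by blast
    have "a' \<otimes> a \<otimes> r \<otimes> (b' \<otimes> b) = a' \<otimes> (a \<otimes> (r \<otimes> b') \<otimes> b)" if "r \<in> A" for r
      using that a b a' b' A_sub by (simp add: m_assoc subset_eq)
    then have "\<forall>r\<in>A. a' \<otimes> a \<otimes> r \<otimes> (b' \<otimes> b) = \<zero>"
      using zero a' b' A_sub by (auto simp: subset_eq)
    then show False
      using prime a' b' unfolding prime_ring_def by auto
  qed
qed

lemma nicely_essential_semiprime_lift: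
  assumes ne: "nicely_essential A R" and semiprime: "semiprime_ring (R\<lparr>carrier := A\<rparr>)"
  shows "semiprime_ring R"
  unfolding semiprime_ring_def
proof (intro ballI impI)
  have A_sub: "A \<subseteq> carrier R" using subringE(1)[OF nicely_essential_imp_subring[OF ne]] .
  fix a assume a: "a \<in> carrier R" and zero: "\<forall>r\<in>carrier R. a \<otimes> r \<otimes> a = \<zero>"
  show "a = \<zero>"
  proof (rule ccontr)
    assume "a \<noteq> \<zero>"
    then obtain a' where a': "a' \<in> A" "a' \<otimes> a \<noteq> \<zero>" "a' \<otimes> a \<in> A"
      using nicely_essential_single[OF ne a] by blast
    have "a' \<otimes> a \<otimes> r \<otimes> (a' \<otimes> a) = a' \<otimes> (a \<otimes> (r \<otimes> a') \<otimes> a)" if "r \<in> A" for r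
      using that a a' A_sub by (simp add: m_assoc subset_eq)
    then have "\<forall>r\<in>A. a' \<otimes> a \<otimes> r \<otimes> (a' \<otimes> a) = \<zero>"
      using zero a' A_sub by (auto simp: subset_eq)
    then show False
      using semiprime a' unfolding semiprime_ring_def by auto
  qed
qed

lemma left_independent_subringI:
  assumes A: "subring A R" and x: "\<forall>i<n. x i \<in> carrier R" and ind: "left_independent R n x"
    and a: "a \<in> A" "\<forall>i<n. a \<otimes> x i \<in> A"
  shows "left_independent (R\<lparr>carrier := A\<rparr>) n (\<lambda>i. a \<otimes> x i)"
  unfolding left_independent_subring_iff[OF A a(2)]
proof (intro allI impI)
  have A_sub: "A \<subseteq> carrier R" using subringE(1)[OF A] .
  fix s i assume s: "(\<forall>i<n. s i \<in> A) \<and> finsum R (\<lambda>i. s i \<otimes> (a \<otimes> x i)) {..<n} = \<zero>"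
    and i: "i < n"
  have "finsum R (\<lambda>i. s i \<otimes> a \<otimes> x i) {..<n} = finsum R (\<lambda>i. s i \<otimes> (a \<otimes> x i)) {..<n}"
    using s x a A_sub by (intro finsum_cong') (auto simp: m_assoc subset_eq)
  then have "s i \<otimes> a \<otimes> x i = \<zero>"
    using left_independentD[OF ind _ _ i, of "\<lambda>i. s i \<otimes> a"] s a A_sub by (auto simp: subset_eq)
  then show "s i \<otimes> (a \<otimes> x i) = \<zero>"
    using s i x a A_sub by (auto simp: m_assoc subset_eq)
qed

text \<open>A relation over R is moved into A by one left factor a \<in> A that keeps its nonzero terms
  nonzero and its coefficients in A.\<close>
lemma nicely_essential_left_independent_lift:
  assumes ne: "nicely_essential A R" and x: "\<forall>i<n. x i \<in> A"
    and ind: "left_independent (R\<lparr>carrier := A\<rparr>) n x"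
  shows "left_independent R n x"
  unfolding left_independent_def
proof (intro allI impI)
  have A: "subring A R" using nicely_essential_imp_subring[OF ne] .
  have A_sub: "A \<subseteq> carrier R" using subringE(1)[OF A] .
  fix s j assume s: "(\<forall>i<n. s i \<in> carrier R) \<and> finsum R (\<lambda>i. s i \<otimes> x i) {..<n} = \<zero>"
    and j: "j < n"
  define E where "E = (s ` {..<n} \<union> (\<lambda>i. s i \<otimes> x i) ` {..<n}) - {\<zero>}"
  have "finite E" "E \<subseteq> carrier R - {\<zero>}"
    using s x A_sub unfolding E_def by auto
  from nicely_essentialD[OF ne this] obtain a where a: "a \<in> A" "\<forall>y\<in>E. a \<otimes> y \<noteq> \<zero> \<and> a \<otimes> y \<in> A"
    by blast
  have a_carr: "a \<in> carrier R" using a A_sub by blast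
  have as_A: "\<forall>i<n. a \<otimes> s i \<in> A"
  proof (intro allI impI)
    fix i assume "i < n"
    then show "a \<otimes> s i \<in> A"
      using a s subringE(2)[OF A] a_carr unfolding E_def by (cases "s i = \<zero>") auto
  qed
  have "finsum R (\<lambda>i. a \<otimes> s i \<otimes> x i) {..<n} = finsum R (\<lambda>i. a \<otimes> (s i \<otimes> x i)) {..<n}"
    using s x a_carr A_sub by (intro finsum_cong') (auto simp: m_assoc subset_eq)
  also have "\<dots> = a \<otimes> finsum R (\<lambda>i. s i \<otimes> x i) {..<n}"
    using s x a_carr A_sub by (intro finsum_rdistr[symmetric]) auto
  also have "\<dots> = \<zero>" using s a_carr by simp
  finally have "finsum R (\<lambda>i. a \<otimes> s i \<otimes> x i) {..<n} = \<zero>" .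
  moreover have "\<forall>s'. (\<forall>i<n. s' i \<in> A) \<and> finsum R (\<lambda>i. s' i \<otimes> x i) {..<n} = \<zero>
      \<longrightarrow> (\<forall>i<n. s' i \<otimes> x i = \<zero>)"
    using ind unfolding left_independent_subring_iff[OF A x] .
  note this[THEN spec, of "\<lambda>i. a \<otimes> s i"]
  ultimately have "a \<otimes> s j \<otimes> x j = \<zero>" using as_A j by blast
  then have "a \<otimes> (s j \<otimes> x j) = \<zero>" using a_carr s x j A_sub by (auto simp: m_assoc subset_eq)
  then show "s j \<otimes> x j = \<zero>" using a j unfolding E_def by blast
qed

lemma nicely_essential_finite_left_udim_lift:
  assumes ne: "nicely_essential A R" and udim: "finite_left_udim (R\<lparr>carrier := A\<rparr>)"
  shows "finite_left_udim R"
proof -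
  have A: "subring A R" using nicely_essential_imp_subring[OF ne] .
  interpret A: ring "R\<lparr>carrier := A\<rparr>" by (rule subring_is_ring[OF A])
  obtain N where N: "\<And>n x. \<forall>i<n. x i \<in> A - {\<zero>} \<Longrightarrow> left_independent (R\<lparr>carrier := A\<rparr>) n x \<Longrightarrow> n \<le> N"
    using udim unfolding A.finite_left_udim_iff by auto
  have "n \<le> N" if x: "\<forall>i<n. x i \<in> carrier R - {\<zero>}" and ind: "left_independent R n x" for n x
  proof -
    have "finite (x ` {..<n})" "x ` {..<n} \<subseteq> carrier R - {\<zero>}" using x by auto
    from nicely_essentialD[OF ne this] obtain a where a: "a \<in> A" "\<forall>y\<in>x ` {..<n}. a \<otimes> y \<noteq> \<zero> \<and> a \<otimes> y \<in> A"
      by blast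
    then have "\<forall>i<n. a \<otimes> x i \<in> A - {\<zero>}" by auto
    moreover have "left_independent (R\<lparr>carrier := A\<rparr>) n (\<lambda>i. a \<otimes> x i)"
      using left_independent_subringI[OF A _ ind] x a by auto
    ultimately show "n \<le> N" by (rule N)
  qed
  then show ?thesis unfolding finite_left_udim_iff by blast
qed

lemma nicely_essential_finite_left_udim_restrict:
  assumes ne: "nicely_essential A R" and udim: "finite_left_udim R"
  shows "finite_left_udim (R\<lparr>carrier := A\<rparr>)"
proof -
  have A_sub: "A \<subseteq> carrier R" using subringE(1)[OF nicely_essential_imp_subring[OF ne]] .
  interpret A: ring "R\<lparr>carrier := A\<rparr>" by (rule subring_is_ring[OF nicely_essential_imp_subring[OF ne]])
  obtain N where N: "\<And>n x. \<forall>i<n. x i \<in> carrier R - {\<zero>} \<Longrightarrow> left_independent R n x \<Longrightarrow> n \<le> N"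
    using udim unfolding finite_left_udim_iff by blast
  have "n \<le> N" if x: "\<forall>i<n. x i \<in> A - {\<zero>}" and ind: "left_independent (R\<lparr>carrier := A\<rparr>) n x" for n x
    using x A_sub nicely_essential_left_independent_lift[OF ne _ ind] by (intro N) auto
  then show ?thesis unfolding A.finite_left_udim_iff by auto
qed

lemma nicely_essential_left_singular_restrict:
  assumes ne: "nicely_essential A R" and x: "x \<in> carrier R" and singular: "left_singular R x"
    and a: "a \<in> A"
  shows "left_singular (R\<lparr>carrier := A\<rparr>) (a \<otimes> x)"
proof -
  have A: "subring A R" using nicely_essential_imp_subring[OF ne] .
  have A_sub: "A \<subseteq> carrier R" using subringE(1)[OF A] .
  have a_carr: "a \<in> carrier R" using a A_sub by blast
  have "\<exists>d\<in>A. d \<otimes> b \<noteq> \<zero> \<and> d \<otimes> b \<otimes> (a \<otimes> x) = \<zero>" if b: "b \<in> A" "b \<noteq> \<zero>" for b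
  proof (cases "b \<otimes> a = \<zero>")
    case True
    have "\<one> \<otimes> b \<otimes> (a \<otimes> x) = (b \<otimes> a) \<otimes> x" using b a_carr x A_sub by (auto simp: m_assoc)
    with True b x A_sub subringE(3)[OF A] show ?thesis
      by (intro bexI[of _ \<one>]) auto
  next
    case False
    have ba_carr: "b \<otimes> a \<in> carrier R" using b a_carr A_sub by auto
    obtain d where d: "d \<in> carrier R" "d \<otimes> (b \<otimes> a) \<noteq> \<zero>" "d \<otimes> (b \<otimes> a) \<otimes> x = \<zero>"
      using singular ba_carr False unfolding left_singular_def by blast
    have "d \<noteq> \<zero>" using d ba_carr by auto
    then have "finite {d, d \<otimes> (b \<otimes> a)}" "{d, d \<otimes> (b \<otimes> a)} \<subseteq> carrier R - {\<zero>}"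
      using d ba_carr by auto
    from nicely_essentialD[OF ne this] obtain e where e: "e \<in> A" "e \<otimes> d \<in> A" "e \<otimes> (d \<otimes> (b \<otimes> a)) \<noteq> \<zero>"
      by blast
    have e_carr: "e \<in> carrier R" using e A_sub by blast
    have "e \<otimes> d \<otimes> b \<noteq> \<zero>"
    proof
      assume "e \<otimes> d \<otimes> b = \<zero>"
      moreover have "e \<otimes> (d \<otimes> (b \<otimes> a)) = e \<otimes> d \<otimes> b \<otimes> a"
        using e_carr d b a_carr A_sub by (auto simp: m_assoc)
      ultimately show False using e(3) a_carr by simp
    qed
    moreover have "e \<otimes> d \<otimes> b \<otimes> (a \<otimes> x) = e \<otimes> (d \<otimes> (b \<otimes> a) \<otimes> x)"
      using e_carr d b a_carr x A_sub by (auto simp: m_assoc)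
    ultimately show ?thesis using d(3) e(2) e_carr by (intro bexI[of _ "e \<otimes> d"]) auto
  qed
  then show ?thesis unfolding left_singular_def by simp
qed

lemma nicely_essential_left_nonsingular_lift:
  assumes ne: "nicely_essential A R" and nonsingular: "left_nonsingular (R\<lparr>carrier := A\<rparr>)"
  shows "left_nonsingular R"
  unfolding left_nonsingular_def
proof (intro ballI impI)
  fix x assume x: "x \<in> carrier R" and singular: "left_singular R x"
  show "x = \<zero>"
  proof (rule ccontr)
    assume "x \<noteq> \<zero>"
    then obtain a where a: "a \<in> A" "a \<otimes> x \<noteq> \<zero>" "a \<otimes> x \<in> A"
      using nicely_essential_single[OF ne x] by blast
    then have "left_singular (R\<lparr>carrier := A\<rparr>) (a \<otimes> x)"
      using nicely_essential_left_singular_restrict[OF ne x singular] by blast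
    then have "a \<otimes> x = \<zero>" using nonsingular a(3) unfolding left_nonsingular_def by simp
    with a(2) show False by contradiction
  qed
qed

lemma nicely_essential_left_goldie_lift:
  assumes ne: "nicely_essential A R"
    and semiprime: "semiprime_ring (R\<lparr>carrier := A\<rparr>)" and goldie: "left_goldie (R\<lparr>carrier := A\<rparr>)"
  shows "left_goldie R"
proof -
  interpret A: ring "R\<lparr>carrier := A\<rparr>"
    by (rule subring_is_ring[OF nicely_essential_imp_subring[OF ne]])
  have udim: "finite_left_udim R"
    using goldie nicely_essential_finite_left_udim_lift[OF ne] unfolding left_goldie_def by blast
  have "left_nonsingular (R\<lparr>carrier := A\<rparr>)"
    using goldie A.semiprime_acc_left_ann_imp_left_nonsingular[OF semiprime]
    unfolding left_goldie_def by blast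
  then have "left_nonsingular R" by (rule nicely_essential_left_nonsingular_lift[OF ne])
  with udim show ?thesis
    unfolding left_goldie_def using left_nonsingular_finite_left_udim_imp_acc by blast
qed

lemma nicely_essential_left_goldie_restrict:
  assumes ne: "nicely_essential A R" and goldie: "left_goldie R"
  shows "left_goldie (R\<lparr>carrier := A\<rparr>)"
  using goldie nicely_essential_finite_left_udim_restrict[OF ne]
    acc_left_ann_subring[OF nicely_essential_imp_subring[OF ne]]
  unfolding left_goldie_def by blast

lemma left_regular_in_nicely_essential:
  assumes ne: "nicely_essential B R" and c: "left_regular_in c B R"
    and t: "t \<in> carrier R" "t \<otimes> c = \<zero>"
  shows "t = \<zero>"
proof (rule ccontr)
  have B_sub: "B \<subseteq> carrier R" using subringE(1)[OF nicely_essential_imp_subring[OF ne]] .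
  have c_B: "c \<in> B" and regular: "{b \<in> B. b \<otimes> c = \<zero>} = {\<zero>}"
    using c unfolding left_regular_in_def by auto
  assume "t \<noteq> \<zero>"
  then obtain a where a: "a \<in> B" "a \<otimes> t \<noteq> \<zero>" "a \<otimes> t \<in> B"
    using nicely_essential_single[OF ne t(1)] by blast
  have "a \<otimes> t \<otimes> c = a \<otimes> (t \<otimes> c)" using a(1) c_B t(1) B_sub by (auto simp: m_assoc subset_eq)
  then have "a \<otimes> t \<otimes> c = \<zero>" using t a B_sub by auto
  with a(3) regular have "a \<otimes> t = \<zero>" by blast
  with a(2) show False by contradiction
qed

text \<open>With Y = B b, the left ideal l(Y) contains t and is stable under right multiplication by
  elements of B. Choosing a regular c \<in> B with c s \<in> B, the right factor s b kills l(Y) c.\<close>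
lemma strongly_nicely_essential_annihilator:
  assumes udim: "finite_left_udim R" and nonsingular: "left_nonsingular R"
    and B: "strongly_nicely_essential B R"
    and b: "b \<in> carrier R" and t: "t \<in> carrier R" and tBb: "\<forall>r\<in>B. t \<otimes> r \<otimes> b = \<zero>"
    and s: "s \<in> carrier R"
  shows "t \<otimes> s \<otimes> b = \<zero>"
proof -
  have ne: "nicely_essential B R" using B unfolding strongly_nicely_essential_def by blast
  have B_sub: "B \<subseteq> carrier R" and B_mult: "\<And>x y. x \<in> B \<Longrightarrow> y \<in> B \<Longrightarrow> x \<otimes> y \<in> B"
    using subringE(1,6)[OF nicely_essential_imp_subring[OF ne]] by auto
  obtain c where c: "left_regular_in c B R" "c \<otimes> s \<in> B"
    using B s unfolding strongly_nicely_essential_def by blast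
  have c_B: "c \<in> B" using c(1) unfolding left_regular_in_def by blast
  then have c_carr: "c \<in> carrier R" using B_sub by blast
  define Y where "Y = {r \<otimes> b | r. r \<in> B}"
  have Y_sub: "Y \<subseteq> carrier R" using B_sub b by (auto simp: Y_def)
  let ?L = "left_ann R Y"
  have "left_singular R (t \<otimes> (s \<otimes> b))"
  proof (rule left_regular_essential_imp_left_singular[OF udim c_carr _ left_ideal_left_ann[OF Y_sub]])
    show "t' = \<zero>" if "t' \<in> carrier R" "t' \<otimes> c = \<zero>" for t'
      using left_regular_in_nicely_essential[OF ne c(1) that] .
    show "x \<otimes> c \<in> ?L" if x: "x \<in> ?L" for x
    proof -
      have "x \<otimes> c \<otimes> (r \<otimes> b) = x \<otimes> (c \<otimes> r \<otimes> b)" if "r \<in> B" for r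
        using x that c_carr b B_sub left_ann_closed by (auto simp: m_assoc subset_eq)
      moreover have "x \<otimes> (c \<otimes> r \<otimes> b) = \<zero>" if "r \<in> B" for r
        using x B_mult[OF c_B that] by (auto simp: left_ann_def Y_def)
      ultimately show ?thesis
        using x c_carr left_ann_closed by (auto simp: left_ann_def Y_def)
    qed
    show "t \<in> ?L" using tBb t b B_sub by (auto simp: left_ann_def Y_def m_assoc subset_eq)
    show "s \<otimes> b \<in> carrier R" using s b by simp
    show "t' \<otimes> c \<otimes> (s \<otimes> b) = \<zero>" if "t' \<in> ?L" for t'
    proof -
      have "t' \<otimes> c \<otimes> (s \<otimes> b) = t' \<otimes> ((c \<otimes> s) \<otimes> b)"
        using that c_carr s b left_ann_closed by (auto simp: m_assoc subset_eq)
      also have "\<dots> = \<zero>" using that c(2) by (auto simp: left_ann_def Y_def)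
      finally show ?thesis .
    qed
  qed
  then show ?thesis using nonsingular t s b unfolding left_nonsingular_def by (simp add: m_assoc)
qed

lemma strongly_nicely_essential_prime_restrict:
  assumes B: "strongly_nicely_essential B R" and prime: "prime_ring R" and goldie: "left_goldie R"
  shows "prime_ring (R\<lparr>carrier := B\<rparr>)"
proof -
  have B_sub: "B \<subseteq> carrier R"
    using B subringE(1) nicely_essential_imp_subring unfolding strongly_nicely_essential_def by blast
  have udim: "finite_left_udim R" and "acc_left_ann R" using goldie unfolding left_goldie_def by auto
  then have nonsingular: "left_nonsingular R"
    using semiprime_acc_left_ann_imp_left_nonsingular prime_ring_imp_semiprime_ring[OF prime] by blast
  show ?thesis
    unfolding prime_ring_def
  proof (simp, intro conjI ballI impI)
    show "\<one> \<noteq> \<zero>" using prime unfolding prime_ring_def by blast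
    fix a b assume a: "a \<in> B" and b: "b \<in> B" and zero: "\<forall>r\<in>B. a \<otimes> r \<otimes> b = \<zero>"
    have "\<forall>s\<in>carrier R. a \<otimes> s \<otimes> b = \<zero>"
      using strongly_nicely_essential_annihilator[OF udim nonsingular B] a b zero B_sub by blast
    then show "a = \<zero> \<or> b = \<zero>" using prime a b B_sub unfolding prime_ring_def by blast
  qed
qed

lemma strongly_nicely_essential_semiprime_restrict:
  assumes B: "strongly_nicely_essential B R" and semiprime: "semiprime_ring R" and goldie: "left_goldie R"
  shows "semiprime_ring (R\<lparr>carrier := B\<rparr>)"
proof -
  have B_sub: "B \<subseteq> carrier R"
    using B subringE(1) nicely_essential_imp_subring unfolding strongly_nicely_essential_def by blast
  have udim: "finite_left_udim R" and "acc_left_ann R" using goldie unfolding left_goldie_def by auto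
  then have nonsingular: "left_nonsingular R"
    using semiprime_acc_left_ann_imp_left_nonsingular[OF semiprime] by blast
  show ?thesis
    unfolding semiprime_ring_def
  proof (simp, intro ballI impI)
    fix a assume a: "a \<in> B" and zero: "\<forall>r\<in>B. a \<otimes> r \<otimes> a = \<zero>"
    have "\<forall>s\<in>carrier R. a \<otimes> s \<otimes> a = \<zero>"
      using strongly_nicely_essential_annihilator[OF udim nonsingular B] a zero B_sub by blast
    then show "a = \<zero>" using semiprime a B_sub unfolding semiprime_ring_def by blast
  qed
qed

end

theorem mainTheorem4:
  fixes S :: "('a, 'b) ring_scheme" and A :: "'a set"
  assumes "ring S" and "subring A S" and "nicely_essential A S"
  shows "(prime_ring (S\<lparr>carrier := A\<rparr>) \<longrightarrow> prime_ring S)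
       \<and> (semiprime_ring (S\<lparr>carrier := A\<rparr>) \<longrightarrow> semiprime_ring S)
       \<and> (prime_ring (S\<lparr>carrier := A\<rparr>) \<and> left_goldie (S\<lparr>carrier := A\<rparr>)
            \<longrightarrow> prime_ring S \<and> left_goldie S)
       \<and> (semiprime_ring (S\<lparr>carrier := A\<rparr>) \<and> left_goldie (S\<lparr>carrier := A\<rparr>)
            \<longrightarrow> semiprime_ring S \<and> left_goldie S)
       \<and> (left_goldie S \<longrightarrow> left_goldie (S\<lparr>carrier := A\<rparr>))
       \<and> (\<forall>B. strongly_nicely_essential B S \<longrightarrow>
            (prime_ring S \<and> left_goldie S
               \<longrightarrow> prime_ring (S\<lparr>carrier := B\<rparr>) \<and> left_goldie (S\<lparr>carrier := B\<rparr>))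
          \<and> (semiprime_ring S \<and> left_goldie S
               \<longrightarrow> semiprime_ring (S\<lparr>carrier := B\<rparr>) \<and> left_goldie (S\<lparr>carrier := B\<rparr>)))"
proof -
  interpret S: ring S by (rule assms(1))
  note ne = assms(3)
  have restrict_goldie: "left_goldie (S\<lparr>carrier := B\<rparr>)"
    if "strongly_nicely_essential B S" "left_goldie S" for B
    using that S.nicely_essential_left_goldie_restrict unfolding strongly_nicely_essential_def by blast
  show ?thesis
    using S.nicely_essential_prime_lift[OF ne] S.nicely_essential_semiprime_lift[OF ne]
      S.nicely_essential_left_goldie_lift[OF ne] S.nicely_essential_left_goldie_restrict[OF ne]
      S.strongly_nicely_essential_prime_restrict S.strongly_nicely_essential_semiprime_restrict
      restrict_goldie prime_ring_imp_semiprime_ring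
    by blast
qed

end
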